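(* There is a constant $c>0$ such that the following holds for every $k\ge1$. Let $G$ be the graph obtained from a complete binary tree of depth $k$ (root $x$, $2^k$ leaves) by adding the edges of an arbitrary $3$-regular graph on the vertex set of the $2^k$ leaves. Consider simple random walk on $G$, with stationary measure $\pi(v)=\deg(v)/\sum_w\deg(w)$, and let $S$ consist of the $2^k$ leaves together with the root $x$. Then $$h_S(x)\ge \frac{ck}{|S|}.$$
   Context: For simple random walk $(X_t)$ on $G$ and $A\subset G$, $T_A=\inf\{t\ge0:X_t\in A\}$. The harmonic measure on $S$ from $y$ is $h_{y,S}(z)=\Pr_y[X_{T_S}=z]$ and the harmonic measure from stationarity is $h_S(z)=\sum_y\pi(y)h_{y,S}(z)$. *)

theory Defs
  imports Complex_Main
begin

definition deg :: "'a set \<Rightarrow> ('a \<Rightarrow> 'a \<Rightarrow> bool) \<Rightarrow> 'a \<Rightarrow> nat" where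
  "deg V adj v = card {w \<in> V. adj v w}"

definition trans_prob :: "'a set \<Rightarrow> ('a \<Rightarrow> 'a \<Rightarrow> bool) \<Rightarrow> 'a \<Rightarrow> 'a \<Rightarrow> real" where
  "trans_prob V adj u v = (if v \<in> V \<and> adj u v then 1 / real (deg V adj u) else 0)"

text \<open>hit_at V adj n S y z = Pr_y[T_S = n and X_n = z], where T_S = inf{t \<ge> 0. X_t \<in> S}.\<close>
fun hit_at :: "'a set \<Rightarrow> ('a \<Rightarrow> 'a \<Rightarrow> bool) \<Rightarrow> nat \<Rightarrow> 'a set \<Rightarrow> 'a \<Rightarrow> 'a \<Rightarrow> real" where
  "hit_at V adj 0 S y z = (if y \<in> S \<and> y = z then 1 else 0)"
| "hit_at V adj (Suc n) S y z =
     (if y \<in> S then 0 else (\<Sum>w\<in>V. trans_prob V adj y w * hit_at V adj n S w z))"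

text \<open>Harmonic measure on S from y: h_{y,S}(z) = Pr_y[X_{T_S} = z] = sum over n of Pr_y[T_S = n, X_n = z].\<close>
definition harmonic_from :: "'a set \<Rightarrow> ('a \<Rightarrow> 'a \<Rightarrow> bool) \<Rightarrow> 'a set \<Rightarrow> 'a \<Rightarrow> 'a \<Rightarrow> real" where
  "harmonic_from V adj S y z = (\<Sum>n. hit_at V adj n S y z)"

definition stationary :: "'a set \<Rightarrow> ('a \<Rightarrow> 'a \<Rightarrow> bool) \<Rightarrow> 'a \<Rightarrow> real" where
  "stationary V adj v = real (deg V adj v) / (\<Sum>w\<in>V. real (deg V adj w))"

definition harmonic_stat :: "'a set \<Rightarrow> ('a \<Rightarrow> 'a \<Rightarrow> bool) \<Rightarrow> 'a set \<Rightarrow> 'a \<Rightarrow> real" where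
  "harmonic_stat V adj S z = (\<Sum>y\<in>V. stationary V adj y * harmonic_from V adj S y z)"

text \<open>Vertices 1 .. 2^(k+1)-1, root 1, children of i are 2i and 2i+1; leaves 2^k .. 2^(k+1)-1.\<close>
definition tree_verts :: "nat \<Rightarrow> nat set" where
  "tree_verts k = {1..<2^(Suc k)}"

definition leaves :: "nat \<Rightarrow> nat set" where
  "leaves k = {2^k..<2^(Suc k)}"

definition tree_adj :: "nat \<Rightarrow> nat \<Rightarrow> nat \<Rightarrow> bool" where
  "tree_adj k u v \<longleftrightarrow> u \<in> tree_verts k \<and> v \<in> tree_verts k \<and>
     (v = 2*u \<or> v = 2*u+1 \<or> u = 2*v \<or> u = 2*v+1)"

definition cubic_graph_on :: "nat set \<Rightarrow> (nat \<Rightarrow> nat \<Rightarrow> bool) \<Rightarrow> bool" where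
  "cubic_graph_on L E \<longleftrightarrow>
     (\<forall>u v. E u v \<longrightarrow> u \<in> L \<and> v \<in> L) \<and>
     (\<forall>u v. E u v \<longrightarrow> E v u) \<and>
     (\<forall>u. \<not> E u u) \<and>
     (\<forall>u\<in>L. card {v. E u v} = 3)"

definition G_adj :: "nat \<Rightarrow> (nat \<Rightarrow> nat \<Rightarrow> bool) \<Rightarrow> nat \<Rightarrow> nat \<Rightarrow> bool" where
  "G_adj k E u v \<longleftrightarrow> tree_adj k u v \<or> E u v"

end

theory Submission
  imports Defs
begin

text \<open>
  Write S for the leaves plus the root x = 1, I = {2..<2^k} for the interior
  vertices other than the root, and H y = h_{y,S}(x).  The function H is harmonic at every
  interior vertex, and an interior vertex has exactly its three tree neighbours (degree 3).
  The explicit function F y = 2^{-depth y} - 2^{-k} is harmonic for the same three-point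
  averaging, equals 1 at the root and 0 at the leaves, so by a minimum principle on the
  tree H \<ge> F on I.  Summing over each level gives \<Sum>_{y\<in>I} F y \<ge> k - 2.  Since
  h_S(x) = \<Sum>_y deg y \<cdot> H y / \<Sum>_y deg y, every degree is at most 6 and the graph has fewer
  than 2^{k+1} vertices, we get h_S(x) \<ge> (k/4)/(12\<cdot>2^k) \<ge> (k/48)/|S|.
\<close>

lemma trans_prob_nonneg: "trans_prob V adj u v \<ge> 0"
  by (simp add: trans_prob_def)

lemma trans_prob_sum_le_1:
  assumes "finite V"
  shows "(\<Sum>w\<in>V. trans_prob V adj u w) \<le> 1"
proof -
  have "(\<Sum>w\<in>V. trans_prob V adj u w) = (\<Sum>w\<in>V. if adj u w then 1 / real (deg V adj u) else 0)"
    by (intro sum.cong) (auto simp: trans_prob_def)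
  also have "\<dots> = (\<Sum>w\<in>{w\<in>V. adj u w}. 1 / real (deg V adj u))"
    by (simp only: sum.inter_filter[OF assms])
  also have "\<dots> = real (card {w\<in>V. adj u w}) / real (deg V adj u)" by simp
  also have "\<dots> \<le> 1" by (simp add: deg_def)
  finally show ?thesis .
qed

lemma hit_at_nonneg: "hit_at V adj n S y z \<ge> 0"
  by (induction n arbitrary: y) (auto intro!: sum_nonneg mult_nonneg_nonneg simp: trans_prob_nonneg)

lemma hit_at_start_in_S: "y \<in> S \<Longrightarrow> hit_at V adj n S y z = (if n = 0 \<and> y = z then 1 else 0)"
  by (cases n) auto

text \<open>The events {T_S = n, X_n = z} are disjoint, so their probabilities sum to at most 1.\<close>
lemma hit_at_partial_sum_le_1:
  assumes "finite V"
  shows "(\<Sum>n<N. hit_at V adj n S y z) \<le> 1"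
proof (induction N arbitrary: y)
  case 0
  then show ?case by simp
next
  case (Suc N)
  show ?case
  proof (cases "y \<in> S")
    case True
    then show ?thesis by (simp only: sum.lessThan_Suc_shift) (simp add: hit_at_start_in_S)
  next
    case False
    have "(\<Sum>n<Suc N. hit_at V adj n S y z)
        = (\<Sum>n<N. \<Sum>w\<in>V. trans_prob V adj y w * hit_at V adj n S w z)"
      using False by (simp only: sum.lessThan_Suc_shift) simp
    also have "\<dots> = (\<Sum>w\<in>V. trans_prob V adj y w * (\<Sum>n<N. hit_at V adj n S w z))"
      by (simp add: sum.swap[of _ "{..<N}"] sum_distrib_left)
    also have "\<dots> \<le> (\<Sum>w\<in>V. trans_prob V adj y w * 1)"
      by (intro sum_mono mult_left_mono Suc trans_prob_nonneg)
    also have "\<dots> \<le> 1" using trans_prob_sum_le_1[OF assms] by simp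
    finally show ?thesis .
  qed
qed

lemma hit_at_summable:
  assumes "finite V"
  shows "summable (\<lambda>n. hit_at V adj n S y z)"
  by (rule summableI_nonneg_bounded[where x=1])
     (auto simp: hit_at_nonneg hit_at_partial_sum_le_1[OF assms])

lemma harmonic_from_nonneg:
  assumes "finite V"
  shows "harmonic_from V adj S y z \<ge> 0"
  unfolding harmonic_from_def
  by (rule suminf_nonneg[OF hit_at_summable[OF assms]]) (simp add: hit_at_nonneg)

text \<open>Boundary values: a walk started in S is stopped immediately.\<close>
lemma harmonic_from_in_S:
  assumes "y \<in> S"
  shows "harmonic_from V adj S y z = (if y = z then 1 else 0)"
proof -
  have "(\<lambda>n. hit_at V adj n S y z) = (\<lambda>n. if n = 0 then (if y = z then 1 else 0) else 0)"
    using assms by (auto simp: fun_eq_iff hit_at_start_in_S)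
  then show ?thesis
    unfolding harmonic_from_def
    using sums_single[of 0 "\<lambda>_. if y = z then 1 else (0::real)"] sums_unique by fastforce
qed

lemma harmonic_from_first_step:
  assumes "finite V" "y \<notin> S"
  shows "harmonic_from V adj S y z = (\<Sum>w\<in>V. trans_prob V adj y w * harmonic_from V adj S w z)"
proof -
  let ?f = "\<lambda>n. hit_at V adj n S y z"
  have "suminf ?f = ?f 0 + (\<Sum>n. ?f (Suc n))"
    using suminf_split_head[OF hit_at_summable[OF assms(1)]] by simp
  also have "?f 0 = 0" using assms by simp
  also have "(\<Sum>n. ?f (Suc n)) = (\<Sum>n. \<Sum>w\<in>V. trans_prob V adj y w * hit_at V adj n S w z)"
    using assms by simp
  also have "\<dots> = (\<Sum>w\<in>V. \<Sum>n. trans_prob V adj y w * hit_at V adj n S w z)"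
    by (rule suminf_sum) (intro summable_mult hit_at_summable[OF assms(1)])
  also have "\<dots> = (\<Sum>w\<in>V. trans_prob V adj y w * harmonic_from V adj S w z)"
    unfolding harmonic_from_def by (intro sum.cong refl suminf_mult hit_at_summable[OF assms(1)])
  finally show ?thesis unfolding harmonic_from_def by simp
qed

fun depth :: "nat \<Rightarrow> nat" where
  "depth y = (if y \<le> 1 then 0 else Suc (depth (y div 2)))"

declare depth.simps[simp del]

lemma depth_root [simp]: "depth (Suc 0) = 0"
  by (simp add: depth.simps)

lemma depth_parent: "i \<ge> 2 \<Longrightarrow> depth i = Suc (depth (i div 2))"
  by (subst depth.simps) simp

lemma depth_level: "2^j \<le> y \<Longrightarrow> y < 2^(Suc j) \<Longrightarrow> depth y = j"
proof (induction j arbitrary: y)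
  case 0
  then show ?case by (simp add: depth.simps)
next
  case (Suc j)
  have "(2::nat) \<le> 2^Suc j" by simp
  then have "y \<ge> 2" using Suc.prems(1) by linarith
  moreover have "depth (y div 2) = j" using Suc.prems by (intro Suc.IH) auto
  ultimately show ?case by (simp add: depth_parent)
qed

text \<open>Each of the n levels above depth n carries total weight 2^j \<cdot> 2^{-j} = 1.\<close>
lemma depth_weight_sum: "(\<Sum>y\<in>{1..<2^n}. (1/2::real) ^ depth y) = real n"
proof (induction n)
  case 0
  then show ?case by simp
next
  case (Suc n)
  have level: "(\<Sum>y\<in>{2^n..<(2::nat)^Suc n}. (1/2::real) ^ depth y) = 1"
  proof -
    have "(\<Sum>y\<in>{2^n..<(2::nat)^Suc n}. (1/2::real) ^ depth y)
        = (\<Sum>y\<in>{2^n..<(2::nat)^Suc n}. (1/2::real) ^ n)"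
      by (intro sum.cong refl) (simp add: depth_level[of n])
    also have "\<dots> = 1" by (simp add: power_one_over)
    finally show ?thesis .
  qed
  have "(\<Sum>y\<in>{1..<2^Suc n}. (1/2::real) ^ depth y)
      = (\<Sum>y\<in>{1..<2^n}. (1/2::real) ^ depth y) + (\<Sum>y\<in>{2^n..<2^Suc n}. (1/2::real) ^ depth y)"
    by (rule sum.atLeastLessThan_concat[symmetric]) auto
  then show ?case using Suc.IH level by simp
qed

text \<open>The comparison function F y = 2^{-depth y} - 2^{-k}: it is 1 at the root, 0 on the leaves,
  and satisfies the three-point mean value property at every non-root vertex.\<close>
definition tree_bound :: "nat \<Rightarrow> nat \<Rightarrow> real" where
  "tree_bound k y = (1/2) ^ depth y - (1/2) ^ k"

lemma tree_bound_mean_value: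
  assumes "2 \<le> i"
  shows "3 * tree_bound k i = tree_bound k (i div 2) + tree_bound k (2*i) + tree_bound k (2*i+1)"
proof -
  have "depth i = Suc (depth (i div 2))" "depth (2*i) = Suc (depth i)" "depth (2*i+1) = Suc (depth i)"
    using assms by (simp_all add: depth_parent)
  then show ?thesis by (simp add: tree_bound_def field_simps)
qed

lemma tree_bound_interior_sum:
  assumes "k \<ge> 1"
  shows "(\<Sum>y\<in>{2..<2^k}. tree_bound k y) \<ge> real k - 2"
proof -
  have "(2::nat) \<le> 2^k" using power_increasing[of 1 k "2::nat"] assms by simp
  then have first_level_split: "{1..<(2::nat)^k} = insert 1 {2..<2^k}" by auto
  have "(\<Sum>y\<in>{2..<(2::nat)^k}. (1/2::real) ^ depth y) = real k - 1"
    using depth_weight_sum[of k] unfolding first_level_split by simp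
  moreover have "real (card {2..<(2::nat)^k}) * (1/2) ^ k \<le> 1"
  proof -
    have "real (card {2..<(2::nat)^k}) * (1/2::real) ^ k \<le> 2^k * (1/2) ^ k" by simp
    also have "\<dots> = 1" by (simp add: power_one_over)
    finally show ?thesis .
  qed
  ultimately show ?thesis by (simp add: tree_bound_def sum_subtractf)
qed

text \<open>An interior vertex is not a leaf, so the cubic graph adds no edges at it: its neighbours
  are its parent and its two children.\<close>
lemma interior_neighbours:
  assumes "cubic_graph_on (leaves k) E" "2 \<le> i" "i < 2^k"
  shows "{w \<in> tree_verts k. G_adj k E i w} = {i div 2, 2*i, 2*i+1}"
proof -
  have "\<not> E i w" for w
  proof
    assume "E i w"
    then have "i \<in> leaves k" using assms(1) unfolding cubic_graph_on_def by blast
    then show False using assms(3) by (simp add: leaves_def)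
  qed
  then show ?thesis using assms by (auto simp: G_adj_def tree_adj_def tree_verts_def)
qed

lemma parent_children_distinct: "2 \<le> (i::nat) \<Longrightarrow> i div 2 \<noteq> 2*i \<and> i div 2 \<noteq> 2*i+1 \<and> 2*i \<noteq> 2*i+1"
  by presburger

lemma interior_degree:
  assumes "cubic_graph_on (leaves k) E" "2 \<le> i" "i < 2^k"
  shows "deg (tree_verts k) (G_adj k E) i = 3"
  using parent_children_distinct[OF assms(2)] unfolding deg_def interior_neighbours[OF assms] by auto

lemma interior_step_average:
  assumes "cubic_graph_on (leaves k) E" "2 \<le> i" "i < 2^k"
  shows "(\<Sum>w\<in>tree_verts k. trans_prob (tree_verts k) (G_adj k E) i w * f w)
       = (f (i div 2) + f (2*i) + f (2*i+1)) / 3"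
proof -
  let ?N = "{w \<in> tree_verts k. G_adj k E i w}"
  have fin: "finite (tree_verts k)" by (simp add: tree_verts_def)
  have "(\<Sum>w\<in>tree_verts k. trans_prob (tree_verts k) (G_adj k E) i w * f w)
      = (\<Sum>w\<in>tree_verts k. if w \<in> ?N then f w / 3 else 0)"
    by (intro sum.cong refl) (simp add: trans_prob_def interior_degree[OF assms])
  also have "\<dots> = (\<Sum>w\<in>tree_verts k \<inter> ?N. f w / 3)"
    by (simp only: sum.inter_restrict[OF fin])
  also have "tree_verts k \<inter> ?N = {i div 2, 2*i, 2*i+1}"
    using interior_neighbours[OF assms] by auto
  also have "(\<Sum>w\<in>{i div 2, 2*i, 2*i+1}. f w / 3) = (f (i div 2) + f (2*i) + f (2*i+1)) / 3"
    using parent_children_distinct[OF assms(2)] by (simp add: add_divide_distrib)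
  finally show ?thesis .
qed

text \<open>Every vertex has at most 3 tree neighbours and at most 3 neighbours in the cubic graph.\<close>
lemma degree_le_6:
  assumes "cubic_graph_on (leaves k) E"
  shows "deg (tree_verts k) (G_adj k E) v \<le> 6"
proof -
  have cubic: "finite {w. E v w} \<and> card {w. E v w} \<le> 3"
  proof (cases "v \<in> leaves k")
    case True
    then have "card {w. E v w} = 3" using assms by (simp add: cubic_graph_on_def)
    then show ?thesis using card.infinite by fastforce
  next
    case False
    then have "{w. E v w} = {}" using assms by (auto simp: cubic_graph_on_def)
    then show ?thesis by simp
  qed
  have "{w \<in> tree_verts k. G_adj k E v w} \<subseteq> {v div 2, 2*v, 2*v+1} \<union> {w. E v w}"
    by (auto simp: G_adj_def tree_adj_def)
  then have "deg (tree_verts k) (G_adj k E) v \<le> card ({v div 2, 2*v, 2*v+1} \<union> {w. E v w})"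
    unfolding deg_def using cubic by (intro card_mono) auto
  also have "\<dots> \<le> card {v div 2, 2*v, 2*v+1} + card {w. E v w}" by (rule card_Un_le)
  also have "\<dots> \<le> 6" using cubic by (simp add: card_insert_if)
  finally show ?thesis .
qed

text \<open>For k \<ge> 1 the root is adjacent to its child 2.\<close>
lemma root_degree_pos:
  assumes "k \<ge> 1"
  shows "deg (tree_verts k) (G_adj k E) 1 \<ge> 1"
proof -
  have "(2::nat) ^ 2 \<le> 2 ^ Suc k" by (rule power_increasing) (use assms in auto)
  then have "2 \<in> {w \<in> tree_verts k. G_adj k E 1 w}"
    by (auto simp: G_adj_def tree_adj_def tree_verts_def)
  moreover have "finite {w \<in> tree_verts k. G_adj k E 1 w}" by (simp add: tree_verts_def)
  ultimately have "card {w \<in> tree_verts k. G_adj k E 1 w} > 0" by (auto simp: card_gt_0_iff)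
  then show ?thesis unfolding deg_def by simp
qed

text \<open>A function with the three-point mean value property on the interior {2..<2^k} that is
  nonnegative on the remaining vertices (root and leaves) is nonnegative everywhere: at the
  largest interior minimiser the child 2i would be a larger minimiser or a boundary vertex.\<close>
lemma tree_minimum_principle:
  fixes D :: "nat \<Rightarrow> real"
  assumes mean: "\<And>i. i \<in> {2..<2^k} \<Longrightarrow> 3 * D i = D (i div 2) + D (2*i) + D (2*i+1)"
    and boundary: "\<And>y. y \<in> {1..<2^Suc k} \<Longrightarrow> y \<notin> {2..<2^k} \<Longrightarrow> D y \<ge> 0"
    and y: "y \<in> {2..<2^k}"
  shows "D y \<ge> 0"
proof (rule ccontr)
  let ?I = "{2..<(2::nat)^k}"
  assume "\<not> D y \<ge> 0"
  define m where "m = Min (D ` ?I)"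
  have m_le: "m \<le> D w" if "w \<in> ?I" for w unfolding m_def using that by simp
  have m_neg: "m < 0" using m_le[OF y] \<open>\<not> D y \<ge> 0\<close> by linarith
  have m_ge: "m \<le> D w" if "w \<in> {1..<2^Suc k}" for w
    using m_le boundary[OF that] m_neg by (cases "w \<in> ?I") auto
  define A where "A = {w \<in> ?I. D w = m}"
  have "m \<in> D ` ?I" unfolding m_def using y by (intro Min_in) auto
  then have A: "finite A" "A \<noteq> {}" by (auto simp: A_def)
  define i where "i = Max A"
  have "i \<in> A" unfolding i_def using A by (rule Max_in)
  then have i: "i \<in> ?I" "D i = m" by (auto simp: A_def)
  have nbrs: "i div 2 \<in> {1..<2^Suc k}" "2*i \<in> {1..<2^Suc k}" "2*i+1 \<in> {1..<2^Suc k}"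
    using i(1) by auto
  have child_min: "D (2*i) = m"
    using mean[OF i(1)] i(2) m_ge[OF nbrs(1)] m_ge[OF nbrs(2)] m_ge[OF nbrs(3)] by linarith
  show False
  proof (cases "2*i \<in> ?I")
    case True
    then have "2*i \<le> i" using child_min A unfolding i_def by (simp add: A_def)
    then show False using i(1) by simp
  next
    case False
    then show False using boundary[OF nbrs(2) False] child_min m_neg by linarith
  qed
qed

lemma harmonic_from_root_ge_tree_bound:
  assumes k: "k \<ge> 1" and cubic: "cubic_graph_on (leaves k) E" and y: "y \<in> {2..<2^k}"
  shows "harmonic_from (tree_verts k) (G_adj k E) (insert 1 (leaves k)) y 1 \<ge> tree_bound k y"
proof -
  define H where "H w = harmonic_from (tree_verts k) (G_adj k E) (insert 1 (leaves k)) w 1" for w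
  have fin: "finite (tree_verts k)" by (simp add: tree_verts_def)
  have "H y - tree_bound k y \<ge> 0"
  proof (rule tree_minimum_principle[where D = "\<lambda>w. H w - tree_bound k w", OF _ _ y])
    fix i assume i: "i \<in> {2..<(2::nat)^k}"
    then have "i \<notin> insert 1 (leaves k)" by (auto simp: leaves_def)
    then have "H i = (\<Sum>w\<in>tree_verts k. trans_prob (tree_verts k) (G_adj k E) i w * H w)"
      unfolding H_def by (rule harmonic_from_first_step[OF fin])
    also have "\<dots> = (H (i div 2) + H (2*i) + H (2*i+1)) / 3"
      using i by (intro interior_step_average[OF cubic]) auto
    finally have "H i = (H (i div 2) + H (2*i) + H (2*i+1)) / 3" .
    then show "3 * (H i - tree_bound k i)
        = (H (i div 2) - tree_bound k (i div 2)) + (H (2*i) - tree_bound k (2*i))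
          + (H (2*i+1) - tree_bound k (2*i+1))"
      using tree_bound_mean_value[of i k] i by simp
  next
    fix w assume "w \<in> {1..<(2::nat)^Suc k}" "w \<notin> {2..<2^k}"
    then consider "w = 1" | "w \<in> leaves k" "w \<noteq> 1" by (force simp: leaves_def)
    then show "H w - tree_bound k w \<ge> 0"
    proof cases
      case 1
      then show ?thesis by (simp add: H_def harmonic_from_in_S tree_bound_def)
    next
      case 2
      then have "depth w = k" by (intro depth_level) (auto simp: leaves_def)
      then show ?thesis using 2 by (simp add: H_def harmonic_from_in_S tree_bound_def)
    qed
  qed
  then show ?thesis by (simp add: H_def)
qed

text \<open>Numerator and denominator of h_S(x) = \<Sum>_y deg y \<cdot> h_{y,S}(x) / \<Sum>_y deg y.\<close>
lemma degree_total_bounds: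
  assumes "k \<ge> 1" "cubic_graph_on (leaves k) E"
  shows "1 \<le> (\<Sum>w\<in>tree_verts k. real (deg (tree_verts k) (G_adj k E) w))"
    and "(\<Sum>w\<in>tree_verts k. real (deg (tree_verts k) (G_adj k E) w)) \<le> 12 * 2^k"
proof -
  have "(1::nat) < 2^Suc k" by (rule one_less_power) auto
  then have root: "1 \<in> tree_verts k" by (simp add: tree_verts_def)
  have "real (deg (tree_verts k) (G_adj k E) 1)
      \<le> (\<Sum>w\<in>tree_verts k. real (deg (tree_verts k) (G_adj k E) w))"
    using root by (intro member_le_sum) (auto simp: tree_verts_def)
  then show "1 \<le> (\<Sum>w\<in>tree_verts k. real (deg (tree_verts k) (G_adj k E) w))"
    using root_degree_pos[OF assms(1), of E] by linarith
  have "(\<Sum>w\<in>tree_verts k. real (deg (tree_verts k) (G_adj k E) w)) \<le> (\<Sum>w\<in>tree_verts k. 6)"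
    using degree_le_6[OF assms(2)] by (intro sum_mono) simp
  also have "\<dots> \<le> 12 * 2^k" by (simp add: tree_verts_def)
  finally show "(\<Sum>w\<in>tree_verts k. real (deg (tree_verts k) (G_adj k E) w)) \<le> 12 * 2^k" .
qed

lemma degree_weighted_root_hits:
  assumes k: "k \<ge> 1" and cubic: "cubic_graph_on (leaves k) E"
  shows "(\<Sum>y\<in>tree_verts k. real (deg (tree_verts k) (G_adj k E) y)
            * harmonic_from (tree_verts k) (G_adj k E) (insert 1 (leaves k)) y 1) \<ge> real k / 4"
proof -
  let ?d = "\<lambda>y. real (deg (tree_verts k) (G_adj k E) y)"
  let ?H = "\<lambda>y. harmonic_from (tree_verts k) (G_adj k E) (insert 1 (leaves k)) y 1"
  let ?I = "{2..<(2::nat)^k}"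
  have fin: "finite (tree_verts k)" by (simp add: tree_verts_def)
  have "(1::nat) < 2^Suc k" by (rule one_less_power) auto
  then have sub: "insert 1 ?I \<subseteq> tree_verts k" by (auto simp: tree_verts_def)
  have interior: "(\<Sum>y\<in>?I. 3 * ?H y) \<ge> 3 * (real k - 2)"
  proof -
    have "(\<Sum>y\<in>?I. 3 * tree_bound k y) \<le> (\<Sum>y\<in>?I. 3 * ?H y)"
      using harmonic_from_root_ge_tree_bound[OF k cubic] by (intro sum_mono) simp
    then show ?thesis using tree_bound_interior_sum[OF k] by (simp add: sum_distrib_left[symmetric])
  qed
  have "(\<Sum>y\<in>?I. 3 * ?H y) \<ge> 0" using harmonic_from_nonneg[OF fin] by (intro sum_nonneg) simp
  then have "real k / 4 \<le> 1 + (\<Sum>y\<in>?I. 3 * ?H y)" using interior by (cases "k \<le> 4") auto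
  also have "\<dots> \<le> ?d 1 * ?H 1 + (\<Sum>y\<in>?I. ?d y * ?H y)"
    using root_degree_pos[OF k, of E] interior_degree[OF cubic]
    by (simp add: harmonic_from_in_S)
  also have "\<dots> = (\<Sum>y\<in>insert 1 ?I. ?d y * ?H y)" by simp
  also have "\<dots> \<le> (\<Sum>y\<in>tree_verts k. ?d y * ?H y)"
    using fin sub harmonic_from_nonneg[OF fin] by (intro sum_mono2) auto
  finally show ?thesis .
qed

theorem mainTheorem6:
  shows "\<exists>c>0. \<forall>k\<ge>1. \<forall>E. cubic_graph_on (leaves k) E \<longrightarrow>
    harmonic_stat (tree_verts k) (G_adj k E) (insert 1 (leaves k)) 1
      \<ge> c * real k / real (card (insert (1::nat) (leaves k)))"
proof (intro exI[of _ "1/48"] conjI allI impI)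
  fix k :: nat and E
  assume k: "1 \<le> k" and cubic: "cubic_graph_on (leaves k) E"
  define N where "N = (\<Sum>y\<in>tree_verts k. real (deg (tree_verts k) (G_adj k E) y)
      * harmonic_from (tree_verts k) (G_adj k E) (insert 1 (leaves k)) y 1)"
  define T where "T = (\<Sum>w\<in>tree_verts k. real (deg (tree_verts k) (G_adj k E) w))"
  have N: "N \<ge> real k / 4" unfolding N_def by (rule degree_weighted_root_hits[OF k cubic])
  have T: "1 \<le> T" "T \<le> 12 * 2^k" unfolding T_def using degree_total_bounds[OF k cubic] by auto
  have S: "real (card (insert (1::nat) (leaves k))) \<ge> 2^k"
    using card_insert_le[of "leaves k" 1] by (simp add: leaves_def)
  have "1/48 * real k / real (card (insert (1::nat) (leaves k))) \<le> 1/48 * real k / 2^k"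
    using S order_less_le_trans[OF zero_less_power[of "2::real" k] S]
    by (intro divide_left_mono mult_pos_pos) auto
  also have "\<dots> = (real k / 4) / (12 * 2^k)" by simp
  also have "\<dots> \<le> N / T" using N T by (intro frac_le) auto
  also have "N / T = harmonic_stat (tree_verts k) (G_adj k E) (insert 1 (leaves k)) 1"
    unfolding harmonic_stat_def stationary_def N_def T_def by (simp add: sum_divide_distrib)
  finally show "harmonic_stat (tree_verts k) (G_adj k E) (insert 1 (leaves k)) 1
      \<ge> 1/48 * real k / real (card (insert (1::nat) (leaves k)))" .
qed simp

end
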